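(* Let $s,q,r\in\mathbb N$ and $c\in\mathbb R^s$. (a) If $K\in\mathbb R^{s\times s}$ is diagonal, then $V_q^{\mathsf T}KV_r$ has Hankel form. (b) If $X\in\mathbb R^{q\times r}$ has Hankel form, then $\mathcal P_q^{\mathsf T}X\mathcal P_r$ and $\mathcal L_{q,r}(X)$ have Hankel form. (c) For all $X\in\mathbb R^{q\times r}$: $\mathcal P_q^{\mathsf T}\mathcal L_{q,r}(X)=\mathcal L_{q,r}(\mathcal P_q^{\mathsf T}X)$ and $\mathcal L_{q,r}(X)\mathcal P_r=\mathcal L_{q,r}(X\mathcal P_r)$.
   Context: $V_k:=(\mathbb 1,c,c^2,\dots,c^{k-1})\in\mathbb R^{s\times k}$ (componentwise powers of the node vector $c$), $\mathcal P_k:=\big(\binom{j-1}{i-1}\big)_{i,j=1}^k$, $\tilde E_k:=(i\,\delta_{i+1,j})_{i,j=1}^k$, and $\mathcal L_{q,r}(X):=\tilde E_q^{\mathsf T}X+X\tilde E_r$ for $X\in\mathbb R^{q\times r}$. A matrix $X=(x_{ij})\in\mathbb R^{q\times r}$ has Hankel form if there are numbers $\xi_k$ with $x_{ij}=\xi_{i+j-1}$ for all $1\le i\le q$, $1\le j\le r$. *)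

theory Defs
  imports "Jordan_Normal_Form.Matrix"
begin

(* Matrices use Jordan_Normal_Form (0-based indices). Paper's 1-based index i corresponds to i-1 here. *)

definition Vmat :: "real vec \<Rightarrow> nat \<Rightarrow> real mat" where
  "Vmat c k = mat (dim_vec c) k (\<lambda>(i,j). (c $ i) ^ j)"

definition Pmat :: "nat \<Rightarrow> real mat" where
  "Pmat k = mat k k (\<lambda>(i,j). real (j choose i))"

definition Etil :: "nat \<Rightarrow> real mat" where
  "Etil k = mat k k (\<lambda>(i,j). if j = i + 1 then real (i + 1) else 0)"

definition Lop :: "nat \<Rightarrow> nat \<Rightarrow> real mat \<Rightarrow> real mat" where
  "Lop q r X = (Etil q)\<^sup>T * X + X * Etil r"

definition hankel_form :: "real mat \<Rightarrow> bool" where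
  "hankel_form X \<longleftrightarrow> (\<exists>\<xi>::nat \<Rightarrow> real. \<forall>i<dim_row X. \<forall>j<dim_col X. X $$ (i,j) = \<xi> (i + j))"

end

theory Submission
  imports Defs
begin

(* Entrywise, L acts on a Hankel matrix with sequence xi as n xi(n-1), and
   P_q^T X P_r has sequence the binomial transform of xi, because composing
   binomial transforms in the two indices is again a binomial transform
   (Vandermonde). V_q^T K V_r has the moment sequence sum_b K_bb c_b^n.
   Part (c) reduces to the commutation E~_k P_k = P_k E~_k, which is the
   absorption identity (i+1) binom(j, i+1) = j binom(j-1, i). *)

lemma Pmat_carrier: "Pmat k \<in> carrier_mat k k"
  by (simp add: Pmat_def)

lemma index_Pmat: "i < k \<Longrightarrow> j < k \<Longrightarrow> Pmat k $$ (i, j) = real (j choose i)"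
  by (simp add: Pmat_def)

lemma Etil_carrier: "Etil k \<in> carrier_mat k k"
  by (simp add: Etil_def)

lemma hankel_formI:
  assumes "\<And>i j. i < dim_row X \<Longrightarrow> j < dim_col X \<Longrightarrow> X $$ (i, j) = \<xi> (i + j)"
  shows "hankel_form X"
  using assms unfolding hankel_form_def by blast

lemma hankel_formE:
  assumes "hankel_form X" and "X \<in> carrier_mat q r"
  obtains \<xi> where "\<And>i j. i < q \<Longrightarrow> j < r \<Longrightarrow> X $$ (i, j) = \<xi> (i + j)"
  using assms unfolding hankel_form_def by auto

text \<open>At \<open>j = 0\<close> the truncated index \<open>j - 1\<close> is harmless: its coefficient is \<open>0\<close>.\<close>

lemma index_mult_Etil:
  assumes "A \<in> carrier_mat m k" and "i < m" and "j < k"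
  shows "(A * Etil k) $$ (i, j) = real j * A $$ (i, j - 1)"
proof -
  have "(A * Etil k) $$ (i, j) = (\<Sum>a<k. if j = Suc a then A $$ (i, a) * real (Suc a) else 0)"
    using assms by (simp add: Etil_def scalar_prod_def atLeast0LessThan
        if_distrib[of "\<lambda>u. _ * u"] cong: if_cong)
  then show ?thesis
    using assms by (cases j) (simp_all add: sum.delta)
qed

lemma index_Etil_mult:
  assumes "A \<in> carrier_mat k n" and "i < k" and "j < n"
  shows "(Etil k * A) $$ (i, j) = (if Suc i < k then real (Suc i) * A $$ (Suc i, j) else 0)"
proof -
  have "(Etil k * A) $$ (i, j) = (\<Sum>a<k. if a = Suc i then real (Suc i) * A $$ (a, j) else 0)"
    using assms by (simp add: Etil_def scalar_prod_def atLeast0LessThan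
        if_distrib[of "\<lambda>u. u * _"] cong: if_cong)
  then show ?thesis
    by simp
qed

lemma index_transpose_Etil_mult:
  assumes "A \<in> carrier_mat k n" and "i < k" and "j < n"
  shows "((Etil k)\<^sup>T * A) $$ (i, j) = real i * A $$ (i - 1, j)"
proof -
  have "(Etil k)\<^sup>T * A = (A\<^sup>T * Etil k)\<^sup>T"
    using assms transpose_mult[of "A\<^sup>T" n k "Etil k" k] Etil_carrier by simp
  then show ?thesis
    using assms index_mult_Etil[of "A\<^sup>T" n k j i] carrier_matD[OF Etil_carrier] by simp
qed

lemma index_Lop:
  assumes "X \<in> carrier_mat q r" and "i < q" and "j < r"
  shows "Lop q r X $$ (i, j) = real i * X $$ (i - 1, j) + real j * X $$ (i, j - 1)"
proof -
  have "Lop q r X $$ (i, j) = ((Etil q)\<^sup>T * X) $$ (i, j) + (X * Etil r) $$ (i, j)"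
    unfolding Lop_def using assms carrier_matD[OF Etil_carrier] by (intro index_add_mat) auto
  then show ?thesis
    using assms by (simp add: index_transpose_Etil_mult index_mult_Etil)
qed

lemma Etil_Pmat_commute: "Etil k * Pmat k = Pmat k * Etil k"
proof (rule eq_matI)
  fix i j
  assume "i < dim_row (Pmat k * Etil k)" and "j < dim_col (Pmat k * Etil k)"
  then have ij: "i < k" "j < k"
    using carrier_matD[OF Pmat_carrier] carrier_matD[OF Etil_carrier] by simp_all
  have "(Etil k * Pmat k) $$ (i, j) = real (Suc i) * real (j choose Suc i)"
    using ij by (auto simp: index_Etil_mult[OF Pmat_carrier ij] index_Pmat binomial_eq_0)
  also have "\<dots> = real j * real ((j - 1) choose i)"
    by (metis of_nat_mult times_binomial_minus1_eq zero_less_Suc diff_Suc_1)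
  also have "\<dots> = real j * Pmat k $$ (i, j - 1)"
    using ij by (cases j) (simp_all add: index_Pmat)
  also have "\<dots> = (Pmat k * Etil k) $$ (i, j)"
    by (rule index_mult_Etil[OF Pmat_carrier ij, symmetric])
  finally show "(Etil k * Pmat k) $$ (i, j) = (Pmat k * Etil k) $$ (i, j)" .
qed (simp_all add: Pmat_def Etil_def)

lemma transpose_mult_Lop_commute:
  assumes M: "M \<in> carrier_mat q q" and commute: "Etil q * M = M * Etil q"
    and X: "X \<in> carrier_mat q r"
  shows "M\<^sup>T * Lop q r X = Lop q r (M\<^sup>T * X)"
proof -
  have E: "Etil q \<in> carrier_mat q q" "Etil r \<in> carrier_mat r r"
    by (simp_all add: Etil_carrier)
  have commute_transpose: "M\<^sup>T * (Etil q)\<^sup>T = (Etil q)\<^sup>T * M\<^sup>T"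
    using commute M E by (metis transpose_mult)
  have "M\<^sup>T * Lop q r X = M\<^sup>T * ((Etil q)\<^sup>T * X) + M\<^sup>T * (X * Etil r)"
    unfolding Lop_def using M E X by (subst mult_add_distrib_mat[of _ q q _ r]) auto
  also have "\<dots> = (M\<^sup>T * (Etil q)\<^sup>T) * X + (M\<^sup>T * X) * Etil r"
    using M E X by (simp add: assoc_mult_mat[of _ q q _ q _ r] assoc_mult_mat[of _ q q _ r _ r])
  also have "\<dots> = (Etil q)\<^sup>T * (M\<^sup>T * X) + (M\<^sup>T * X) * Etil r"
    unfolding commute_transpose using M E X by (simp add: assoc_mult_mat[of _ q q _ q _ r])
  finally show ?thesis
    unfolding Lop_def .
qed

lemma Lop_mult_commute:
  assumes M: "M \<in> carrier_mat r r" and commute: "Etil r * M = M * Etil r"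
    and X: "X \<in> carrier_mat q r"
  shows "Lop q r X * M = Lop q r (X * M)"
proof -
  have E: "Etil q \<in> carrier_mat q q" "Etil r \<in> carrier_mat r r"
    by (simp_all add: Etil_carrier)
  have "Lop q r X * M = ((Etil q)\<^sup>T * X) * M + (X * Etil r) * M"
    unfolding Lop_def using M E X by (subst add_mult_distrib_mat[of _ q r _ _ r]) auto
  also have "\<dots> = (Etil q)\<^sup>T * (X * M) + X * (Etil r * M)"
    using M E X by (simp add: assoc_mult_mat[of _ q q _ r _ r] assoc_mult_mat[of _ q r _ r _ r])
  also have "\<dots> = (Etil q)\<^sup>T * (X * M) + (X * M) * Etil r"
    unfolding commute using M E X by (simp add: assoc_mult_mat[of _ q r _ r _ r])
  finally show ?thesis
    unfolding Lop_def .
qed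

definition binomial_transform :: "(nat \<Rightarrow> 'a::semiring_1) \<Rightarrow> nat \<Rightarrow> 'a" where
  "binomial_transform f n = (\<Sum>k\<le>n. of_nat (n choose k) * f k)"

lemma binomial_transform_cong:
  "(\<And>k. k \<le> n \<Longrightarrow> f k = g k) \<Longrightarrow> binomial_transform f n = binomial_transform g n"
  unfolding binomial_transform_def by simp

lemma binomial_transform_eq_sum_lessThan:
  assumes "n < m"
  shows "binomial_transform f n = (\<Sum>k<m. of_nat (n choose k) * f k)"
  unfolding binomial_transform_def
proof (rule sum.mono_neutral_left)
  show "\<forall>k\<in>{..<m} - {..n}. of_nat (n choose k) * f k = 0"
    by (simp add: binomial_eq_0)
qed (use assms in auto)

lemma binomial_transform_Suc:
  "binomial_transform f (Suc n) = binomial_transform f n + binomial_transform (\<lambda>k. f (Suc k)) n"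
proof -
  have "binomial_transform f (Suc n) = f 0 + (\<Sum>k\<le>n. of_nat (n choose Suc k) * f (Suc k))
          + binomial_transform (\<lambda>k. f (Suc k)) n"
    unfolding binomial_transform_def
    by (subst sum.atMost_Suc_shift) (simp add: sum.distrib algebra_simps)
  moreover have "binomial_transform f n = f 0 + (\<Sum>k\<le>n. of_nat (n choose Suc k) * f (Suc k))"
    unfolding binomial_transform_def
    using sum.atMost_Suc_shift[of "\<lambda>k. of_nat (n choose k) * f k" n] by (simp add: binomial_eq_0)
  ultimately show ?thesis
    by simp
qed

lemma binomial_transform_add:
  "binomial_transform (\<lambda>a. binomial_transform (\<lambda>b. f (a + b)) j) i = binomial_transform f (i + j)"
proof (induction i arbitrary: f)
  case 0
  then show ?case
    by (simp add: binomial_transform_def)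
next
  case (Suc i)
  have "binomial_transform (\<lambda>a. binomial_transform (\<lambda>b. f (a + b)) j) (Suc i)
      = binomial_transform f (i + j) + binomial_transform (\<lambda>k. f (Suc k)) (i + j)"
    using Suc.IH[of f] Suc.IH[of "\<lambda>k. f (Suc k)"] by (simp add: binomial_transform_Suc)
  also have "\<dots> = binomial_transform f (Suc i + j)"
    by (simp add: binomial_transform_Suc)
  finally show ?case .
qed

lemma index_transpose_Pmat_mult:
  assumes "A \<in> carrier_mat k n" and "i < k" and "j < n"
  shows "((Pmat k)\<^sup>T * A) $$ (i, j) = binomial_transform (\<lambda>a. A $$ (a, j)) i"
  using assms by (simp add: Pmat_def scalar_prod_def atLeast0LessThan
      binomial_transform_eq_sum_lessThan[of i k])

lemma index_mult_Pmat:
  assumes "A \<in> carrier_mat m k" and "i < m" and "j < k"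
  shows "(A * Pmat k) $$ (i, j) = binomial_transform (\<lambda>b. A $$ (i, b)) j"
  using assms by (simp add: Pmat_def scalar_prod_def atLeast0LessThan mult.commute
      binomial_transform_eq_sum_lessThan[of j k])

lemma hankel_form_Pascal_congruence:
  assumes X: "X \<in> carrier_mat q r" and "hankel_form X"
  shows "hankel_form ((Pmat q)\<^sup>T * X * Pmat r)"
proof -
  obtain \<xi> where \<xi>: "\<And>i j. i < q \<Longrightarrow> j < r \<Longrightarrow> X $$ (i, j) = \<xi> (i + j)"
    using assms hankel_formE by blast
  show ?thesis
  proof (rule hankel_formI[where \<xi> = "binomial_transform \<xi>"])
    fix i j
    assume "i < dim_row ((Pmat q)\<^sup>T * X * Pmat r)" and "j < dim_col ((Pmat q)\<^sup>T * X * Pmat r)"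
    then have i: "i < q" and j: "j < r"
      using carrier_matD[OF Pmat_carrier] by simp_all
    have "((Pmat q)\<^sup>T * X * Pmat r) $$ (i, j)
        = binomial_transform (\<lambda>b. ((Pmat q)\<^sup>T * X) $$ (i, b)) j"
      using X Pmat_carrier[of q] i j by (intro index_mult_Pmat) auto
    also have "\<dots> = binomial_transform (\<lambda>b. binomial_transform (\<lambda>a. \<xi> (b + a)) i) j"
    proof (rule binomial_transform_cong)
      fix b
      assume "b \<le> j"
      then have "b < r"
        using j by simp
      then show "((Pmat q)\<^sup>T * X) $$ (i, b) = binomial_transform (\<lambda>a. \<xi> (b + a)) i"
        using i \<xi> by (auto simp: index_transpose_Pmat_mult[OF X i] add.commute
            intro: binomial_transform_cong)
    qed
    also have "\<dots> = binomial_transform \<xi> (i + j)"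
      by (simp add: binomial_transform_add add.commute)
    finally show "((Pmat q)\<^sup>T * X * Pmat r) $$ (i, j) = binomial_transform \<xi> (i + j)" .
  qed
qed

lemma hankel_form_Lop:
  assumes X: "X \<in> carrier_mat q r" and "hankel_form X"
  shows "hankel_form (Lop q r X)"
proof -
  obtain \<xi> where \<xi>: "\<And>i j. i < q \<Longrightarrow> j < r \<Longrightarrow> X $$ (i, j) = \<xi> (i + j)"
    using assms hankel_formE by blast
  show ?thesis
  proof (rule hankel_formI[where \<xi> = "\<lambda>n. real n * \<xi> (n - 1)"])
    fix i j
    assume "i < dim_row (Lop q r X)" and "j < dim_col (Lop q r X)"
    then have i: "i < q" and j: "j < r"
      using X carrier_matD[OF Etil_carrier] by (simp_all add: Lop_def)
    then show "Lop q r X $$ (i, j) = real (i + j) * \<xi> (i + j - 1)"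
      using X \<xi> by (cases i; cases j) (simp_all add: index_Lop algebra_simps)
  qed
qed

lemma index_mult_diagonal_mat:
  assumes "A \<in> carrier_mat m n" and "K \<in> carrier_mat n n" and "diagonal_mat K"
    and "i < m" and "j < n"
  shows "(A * K) $$ (i, j) = A $$ (i, j) * K $$ (j, j)"
proof -
  have "(A * K) $$ (i, j) = (\<Sum>a<n. A $$ (i, a) * K $$ (a, j))"
    using assms by (simp add: scalar_prod_def atLeast0LessThan)
  also have "\<dots> = (\<Sum>a<n. if a = j then A $$ (i, a) * K $$ (a, j) else 0)"
    using assms unfolding diagonal_mat_def by (intro sum.cong) auto
  also have "\<dots> = A $$ (i, j) * K $$ (j, j)"
    using assms by simp
  finally show ?thesis .
qed

lemma hankel_form_Vmat_diagonal:
  assumes K: "K \<in> carrier_mat (dim_vec c) (dim_vec c)" "diagonal_mat K"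
  shows "hankel_form ((Vmat c q)\<^sup>T * K * Vmat c r)"
proof (rule hankel_formI[where \<xi> = "\<lambda>n. \<Sum>b<dim_vec c. K $$ (b, b) * (c $ b) ^ n"])
  fix i j
  assume "i < dim_row ((Vmat c q)\<^sup>T * K * Vmat c r)" and "j < dim_col ((Vmat c q)\<^sup>T * K * Vmat c r)"
  then have i: "i < q" and j: "j < r"
    by (simp_all add: Vmat_def)
  have "(Vmat c q)\<^sup>T * K = mat q (dim_vec c) (\<lambda>(i, b). (c $ b) ^ i * K $$ (b, b))"
    using K by (intro eq_matI) (auto simp: index_mult_diagonal_mat[of _ q "dim_vec c"] Vmat_def
        simp del: index_mult_mat(1))
  then have "((Vmat c q)\<^sup>T * K * Vmat c r) $$ (i, j)
      = (\<Sum>b<dim_vec c. ((c $ b) ^ i * K $$ (b, b)) * (c $ b) ^ j)"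
    using i j by (simp add: Vmat_def scalar_prod_def atLeast0LessThan)
  also have "\<dots> = (\<Sum>b<dim_vec c. K $$ (b, b) * (c $ b) ^ (i + j))"
    by (simp add: power_add algebra_simps)
  finally show "((Vmat c q)\<^sup>T * K * Vmat c r) $$ (i, j)
      = (\<Sum>b<dim_vec c. K $$ (b, b) * (c $ b) ^ (i + j))" .
qed

theorem lemma4p3:
  fixes s q r :: nat and c :: "real vec"
  assumes "c \<in> carrier_vec s"
  shows "(\<forall>K \<in> carrier_mat s s. diagonal_mat K \<longrightarrow>
            hankel_form ((Vmat c q)\<^sup>T * K * Vmat c r))
       \<and> (\<forall>X \<in> carrier_mat q r. hankel_form X \<longrightarrow>
            hankel_form ((Pmat q)\<^sup>T * X * Pmat r) \<and> hankel_form (Lop q r X))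
       \<and> (\<forall>X \<in> carrier_mat q r.
            (Pmat q)\<^sup>T * Lop q r X = Lop q r ((Pmat q)\<^sup>T * X)
          \<and> Lop q r X * Pmat r = Lop q r (X * Pmat r))"
  using assms hankel_form_Vmat_diagonal hankel_form_Pascal_congruence hankel_form_Lop
    transpose_mult_Lop_commute[OF Pmat_carrier Etil_Pmat_commute]
    Lop_mult_commute[OF Pmat_carrier Etil_Pmat_commute]
  by auto

end
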